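(* Let $k$ be an odd integer with $k\ge 5$, let $D$ be a strong $k$-quasi-transitive digraph with $\mathrm{diam}(D)\ge k+2$, let $u,v\in V(D)$ with $d(u,v)=k+2$, and let $P=x_0x_1\ldots x_{k+2}$ be a shortest $(u,v)$-path with $x_0=u$, $x_{k+2}=v$. Suppose $D[V(P)]$ is a semicomplete digraph. Then for any $x\in V(D)\setminus V(P)$ and $x_i\in V(P)$: if $x\rightarrow x_i$, then $x$ is adjacent to every vertex of $\{x_0,x_1,\ldots,x_{i-1}\}$; if $x_i\rightarrow x$, then $x$ is adjacent to every vertex of $\{x_{i+1},x_{i+2},\ldots,x_{k+2}\}$.
   Context: All digraphs are finite, without loops or multiple arcs (opposite arcs allowed). $x\rightarrow y$ means $xy\in A(D)$; $x,y$ are adjacent if $x\rightarrow y$ or $y\rightarrow x$. For $k\ge 2$, $D$ is $k$-quasi-transitive if for every path $x_0x_1\ldots x_k$ of length $k$, $x_0$ and $x_k$ are adjacent. $d(x,y)$ is the length of a shortest $(x,y)$-path, $\mathrm{diam}(D)=\max_{x,y}d(x,y)$. $D[S]$ is the induced subdigraph. A semicomplete digraph: every two distinct vertices adjacent. *)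

theory Defs
  imports Main
begin

definition digraph :: "'a set \<Rightarrow> ('a \<times> 'a) set \<Rightarrow> bool" where
  "digraph V A \<longleftrightarrow> finite V \<and> A \<subseteq> V \<times> V \<and> (\<forall>x. (x, x) \<notin> A)"

definition adjacent :: "('a \<times> 'a) set \<Rightarrow> 'a \<Rightarrow> 'a \<Rightarrow> bool" where
  "adjacent A x y \<longleftrightarrow> (x, y) \<in> A \<or> (y, x) \<in> A"

(* a path x_0 x_1 ... x_n given as the list of its (distinct) vertices;
   its length is  length p - 1 *)
definition is_path :: "('a \<times> 'a) set \<Rightarrow> 'a list \<Rightarrow> bool" where
  "is_path A p \<longleftrightarrow> p \<noteq> [] \<and> distinct p \<and>
     (\<forall>i. Suc i < length p \<longrightarrow> (p ! i, p ! Suc i) \<in> A)"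

definition is_uv_path :: "('a \<times> 'a) set \<Rightarrow> 'a \<Rightarrow> 'a \<Rightarrow> 'a list \<Rightarrow> bool" where
  "is_uv_path A u v p \<longleftrightarrow> is_path A p \<and> hd p = u \<and> last p = v"

definition k_quasi_transitive :: "nat \<Rightarrow> 'a set \<Rightarrow> ('a \<times> 'a) set \<Rightarrow> bool" where
  "k_quasi_transitive k V A \<longleftrightarrow>
     (\<forall>p. is_path A p \<and> length p = Suc k \<longrightarrow> adjacent A (hd p) (last p))"

definition strong :: "'a set \<Rightarrow> ('a \<times> 'a) set \<Rightarrow> bool" where
  "strong V A \<longleftrightarrow> (\<forall>u\<in>V. \<forall>v\<in>V. \<exists>p. is_uv_path A u v p)"

definition dist :: "('a \<times> 'a) set \<Rightarrow> 'a \<Rightarrow> 'a \<Rightarrow> nat" where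
  "dist A u v = (LEAST n. \<exists>p. is_uv_path A u v p \<and> length p = Suc n)"

definition diam :: "'a set \<Rightarrow> ('a \<times> 'a) set \<Rightarrow> nat" where
  "diam V A = Max {dist A u v | u v. u \<in> V \<and> v \<in> V}"

definition semicomplete_on :: "('a \<times> 'a) set \<Rightarrow> 'a set \<Rightarrow> bool" where
  "semicomplete_on A S \<longleftrightarrow> (\<forall>x\<in>S. \<forall>y\<in>S. x \<noteq> y \<longrightarrow> adjacent A x y)"

end

theory Submission
  imports Defs
begin

text \<open>
  A shortest path \<open>P = x\<^sub>0 \<dots> x\<^sub>n\<close> has no forward chord \<open>x\<^sub>b \<rightarrow> x\<^sub>a\<close> with \<open>a \<ge> b + 2\<close>, so when
  \<open>D[V(P)]\<close> is semicomplete every such pair is joined by the backward arc \<open>x\<^sub>a \<rightarrow> x\<^sub>b\<close>.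
  Mixing forward steps along \<open>P\<close> with backward jumps, one walks inside \<open>V(P)\<close> from any
  \<open>x\<^sub>h\<close> to any \<open>x\<^sub>l\<close> with \<open>l < h\<close> along a path of exactly \<open>k - 1\<close> arcs.  If \<open>x \<rightarrow> x\<^sub>h\<close>,
  putting \<open>x\<close> in front gives a path of length \<open>k\<close> from \<open>x\<close> to \<open>x\<^sub>l\<close>, and
  \<open>k\<close>-quasi-transitivity makes \<open>x\<close> and \<open>x\<^sub>l\<close> adjacent; the case \<open>x\<^sub>i \<rightarrow> x\<close> is symmetric.
\<close>

definition zigzag_step :: "nat \<Rightarrow> nat \<Rightarrow> bool" where
  "zigzag_step a b \<longleftrightarrow> b = Suc a \<or> b + 2 \<le> a"

lemma successively_zigzag_step_upt: "successively zigzag_step [a..<b]"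
  by (simp add: successively_conv_nth zigzag_step_def)

lemma zigzag_index_list:
  assumes "4 \<le> k" "l < h" "h \<le> k + 2"
  obtains xs where "length xs = k" "distinct xs" "set xs \<subseteq> {..k + 2}"
    "hd xs = h" "last xs = l" "successively zigzag_step xs"
proof (cases "l + 5 \<le> h")
  case True
  define xs where "xs = [h..<k + 3] @ [l + 2..<h - 2] @ [0..<l + 1]"
  have "successively zigzag_step xs" using True assms unfolding xs_def
    by (simp add: successively_append_iff successively_zigzag_step_upt hd_upt last_upt del: upt_Suc)
       (auto simp: zigzag_step_def)
  moreover have "hd xs = h" using assms unfolding xs_def by (simp add: upt_conv_Cons del: upt_Suc)
  moreover have "length xs = k" "distinct xs" "set xs \<subseteq> {..k + 2}" "last xs = l"
    using True assms unfolding xs_def by auto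
  ultimately show ?thesis using that by blast
next
  case False
  \<comment> \<open>Climb from \<open>h\<close> to \<open>a\<close>, jump back to \<open>b\<close> and climb to \<open>l\<close>; \<open>a\<close> and \<open>b\<close> are tuned to give length \<open>k\<close>.\<close>
  define m where "m = h - l - 1"
  define b where "b = min l (3 - m)"
  define a where "a = k + 2 - (3 - m - b)"
  define xs where "xs = [h..<a + 1] @ [b..<l + 1]"
  have ha: "h \<le> a" "a \<le> k + 2" "b + 2 \<le> a" "b \<le> l"
    using False assms unfolding a_def b_def m_def by auto
  have a_b: "a + l + 2 = k + h + b"
    using False assms unfolding a_def b_def m_def by (simp add: min_def) arith
  have "successively zigzag_step xs" using ha unfolding xs_def
    by (simp add: successively_append_iff successively_zigzag_step_upt hd_upt last_upt del: upt_Suc)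
       (simp add: zigzag_step_def)
  moreover have "hd xs = h" using ha unfolding xs_def by (simp add: upt_conv_Cons del: upt_Suc)
  moreover have "length xs = k" using ha a_b unfolding xs_def by simp
  moreover have "distinct xs" "set xs \<subseteq> {..k + 2}" "last xs = l"
    using ha assms(2) unfolding xs_def by auto
  ultimately show ?thesis using that by blast
qed

lemma is_path_conv_successively:
  "is_path A p \<longleftrightarrow> p \<noteq> [] \<and> distinct p \<and> successively (\<lambda>x y. (x, y) \<in> A) p"
  unfolding is_path_def successively_conv_nth by simp

lemma is_path_map_nth:
  assumes "distinct P" "distinct idxs" "idxs \<noteq> []" "set idxs \<subseteq> {..<length P}"
    and "successively (\<lambda>i j. (P ! i, P ! j) \<in> A) idxs"
  shows "is_path A (map ((!) P) idxs)"
proof -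
  have "inj_on ((!) P) (set idxs)"
    using assms(1,4) by (intro inj_on_nth) auto
  then have "distinct (map ((!) P) idxs)" using assms(2) by (simp add: distinct_map)
  moreover have "successively (\<lambda>x y. (x, y) \<in> A) (map ((!) P) idxs)"
    using assms(5) by (simp add: successively_map)
  ultimately show ?thesis using assms(3) unfolding is_path_conv_successively by simp
qed

lemma is_path_ConsI:
  assumes "is_path A Q" "x \<notin> set Q" "(x, hd Q) \<in> A"
  shows "is_path A (x # Q)"
  using assms unfolding is_path_conv_successively by (auto simp: successively_Cons)

lemma is_path_snocI:
  assumes "is_path A Q" "x \<notin> set Q" "(last Q, x) \<in> A"
  shows "is_path A (Q @ [x])"
  using assms unfolding is_path_conv_successively by (auto simp: successively_append_iff)

lemma k_quasi_transitive_adjacent_ends: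
  assumes "k_quasi_transitive k V A" "is_path A p" "length p = Suc k"
  shows "adjacent A (hd p) (last p)"
  using assms unfolding k_quasi_transitive_def by blast

lemma shortest_path_no_forward_chord:
  assumes P: "is_uv_path A u v P" and shortest: "dist A u v = length P - 1"
    and "b + 2 \<le> a" "a < length P"
  shows "(P ! b, P ! a) \<notin> A"
proof
  assume chord: "(P ! b, P ! a) \<in> A"
  have path: "is_path A P" "hd P = u" "last P = v" and "P \<noteq> []"
    using P unfolding is_uv_path_def is_path_def by auto
  define idxs where "idxs = [0..<Suc b] @ [a..<length P]"
  have "successively (\<lambda>i j. (P ! i, P ! j) \<in> A) [0..<Suc b]"
    "successively (\<lambda>i j. (P ! i, P ! j) \<in> A) [a..<length P]"
    using path(1) assms(3,4) unfolding is_path_def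
    by (auto simp: successively_conv_nth simp del: upt_Suc)
  then have "successively (\<lambda>i j. (P ! i, P ! j) \<in> A) idxs"
    using chord assms(3,4) unfolding idxs_def by (simp add: successively_append_iff hd_upt del: upt_Suc)
  then have "is_path A (map ((!) P) idxs)"
    using path(1) assms(3,4) by (intro is_path_map_nth) (auto simp: idxs_def is_path_def)
  moreover have "hd (map ((!) P) idxs) = u"
    using path(2) \<open>P \<noteq> []\<close> hd_conv_nth[of P] unfolding idxs_def
    by (simp add: upt_conv_Cons del: upt_Suc)
  moreover have "last (map ((!) P) idxs) = v"
    using path(3) \<open>P \<noteq> []\<close> assms(4) last_conv_nth[of P] unfolding idxs_def
    by (simp add: last_map last_upt del: upt_Suc)
  ultimately have "dist A u v \<le> b + length P - a"
    unfolding dist_def is_uv_path_def using assms(3,4)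
    by (intro Least_le exI[of _ "map ((!) P) idxs"]) (simp add: idxs_def)
  then show False using shortest assms(3,4) by simp
qed

lemma semicomplete_shortest_path_backward_arc:
  assumes P: "is_uv_path A u v P" and shortest: "dist A u v = length P - 1"
    and semicomplete: "semicomplete_on A (set P)"
    and "b + 2 \<le> a" "a < length P"
  shows "(P ! a, P ! b) \<in> A"
proof -
  have "P ! a \<noteq> P ! b"
    using P assms(4,5) unfolding is_uv_path_def is_path_def by (simp add: nth_eq_iff_index_eq)
  then have "adjacent A (P ! a) (P ! b)"
    using semicomplete assms(4,5) by (simp add: semicomplete_on_def)
  then show ?thesis
    using shortest_path_no_forward_chord[OF P shortest assms(4,5)] by (simp add: adjacent_def)
qed

lemma backward_path_in_semicomplete_shortest_path:
  assumes P: "is_uv_path A u v P" and shortest: "dist A u v = length P - 1"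
    and semicomplete: "semicomplete_on A (set P)"
    and "length P = k + 3" "4 \<le> k" "l < h" "h < k + 3"
  obtains Q where "is_path A Q" "length Q = k" "set Q \<subseteq> set P" "hd Q = P ! h" "last Q = P ! l"
proof -
  obtain xs where xs: "length xs = k" "distinct xs" "set xs \<subseteq> {..k + 2}"
    "hd xs = h" "last xs = l" "successively zigzag_step xs"
    using zigzag_index_list[of k l h] assms(5-7) by auto
  have arc: "(P ! i, P ! j) \<in> A" if "zigzag_step i j" "i < length P" "j < length P" for i j
    using that P semicomplete_shortest_path_backward_arc[OF P shortest semicomplete]
    unfolding zigzag_step_def is_uv_path_def is_path_def by auto
  have "successively (\<lambda>i j. (P ! i, P ! j) \<in> A) xs"
    using successively_mono[OF xs(6), of "\<lambda>i j. (P ! i, P ! j) \<in> A"] arc xs(3) assms(4)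
    by (force simp: set_conv_nth)
  then have "is_path A (map ((!) P) xs)"
    using P xs assms(4,5) unfolding is_uv_path_def
    by (intro is_path_map_nth) (auto simp: is_path_def)
  moreover have "xs \<noteq> []" using xs(1) assms(5) by auto
  moreover have "set (map ((!) P) xs) \<subseteq> set P" using xs(3) assms(4) by auto
  ultimately show ?thesis
    using that[of "map ((!) P) xs"] xs by (simp add: hd_map last_map)
qed

theorem lemma2p7:
  fixes V :: "'a set" and A :: "('a \<times> 'a) set" and k :: nat
    and u v :: 'a and P :: "'a list"
  assumes "digraph V A"
    and "odd k" and "k \<ge> 5"
    and "strong V A"
    and "k_quasi_transitive k V A"
    and "diam V A \<ge> k + 2"
    and "u \<in> V" and "v \<in> V"
    and "dist A u v = k + 2"
    and "is_uv_path A u v P" and "length P = k + 3"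
    and "semicomplete_on A (set P)"
  shows "\<forall>x \<in> V - set P. \<forall>i < k + 3.
           ((x, P ! i) \<in> A \<longrightarrow> (\<forall>j < i. adjacent A x (P ! j))) \<and>
           ((P ! i, x) \<in> A \<longrightarrow> (\<forall>j. i < j \<and> j < k + 3 \<longrightarrow> adjacent A x (P ! j)))"
proof (intro ballI allI impI conjI)
  have shortest: "dist A u v = length P - 1" using assms(9,11) by simp
  fix x i assume x: "x \<in> V - set P" and i: "i < k + 3"
  {
    fix j assume arc: "(x, P ! i) \<in> A" and "j < i"
    obtain Q where Q: "is_path A Q" "length Q = k" "set Q \<subseteq> set P" "hd Q = P ! i" "last Q = P ! j"
      using backward_path_in_semicomplete_shortest_path[OF assms(10) shortest assms(12,11)]
        assms(3) \<open>j < i\<close> i by auto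
    have "is_path A (x # Q)" using Q x arc by (intro is_path_ConsI) auto
    then have "adjacent A (hd (x # Q)) (last (x # Q))"
      by (rule k_quasi_transitive_adjacent_ends[OF assms(5)]) (simp add: Q(2))
    then show "adjacent A x (P ! j)" using Q by (auto simp: is_path_def)
  next
    fix j assume arc: "(P ! i, x) \<in> A" and "i < j \<and> j < k + 3"
    obtain Q where Q: "is_path A Q" "length Q = k" "set Q \<subseteq> set P" "hd Q = P ! j" "last Q = P ! i"
      using backward_path_in_semicomplete_shortest_path[OF assms(10) shortest assms(12,11)]
        assms(3) \<open>i < j \<and> j < k + 3\<close> by auto
    have "is_path A (Q @ [x])" using Q x arc by (intro is_path_snocI) auto
    then have "adjacent A (hd (Q @ [x])) (last (Q @ [x]))"
      by (rule k_quasi_transitive_adjacent_ends[OF assms(5)]) (simp add: Q(2))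
    then show "adjacent A x (P ! j)" using Q by (auto simp: is_path_def adjacent_def)
  }
qed

end
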